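(* Let $K$ be a field of characteristic zero, $n\ge1$. Let $\mathcal L$ be the set of $n\times n$ matrices $B$ over $K$ of the form: for $1\le k\le n$ and $0\le i\le k-1$, the entry in row $i-k+n+1$ and column $k$ equals $b_{k,i}$, all entries above these positions (i.e. entries in row $a$, column $k$ with $a< n-k+1$) are $0$, and $b_{k,0}\ne 0$ for all $1\le k\le n$ (so $B$ is zero above the antidiagonal, with nonzero antidiagonal entries $b_{1,0},\dots,b_{n,0}$). Let $s_{k,i}$ be the coordinate function on $\mathcal L$ with $s_{k,i}(B)=b_{k,i}$; these are algebraically independent and $K(\mathcal L)=K(s_{k,i}:1\le k\le n,0\le i\le k-1)$. Order the $s_{k,i}$ as $$s_{1,0}<s_{2,0}<\dots<s_{n,0}<s_{2,1}<s_{3,2}<s_{3,1}<s_{4,3}<s_{4,2}<s_{4,1}<\dots<s_{n,n-1}<s_{n,n-2}<\dots<s_{n,1},$$ i.e. all $s_{k,0}$ first in increasing $k$, then for $k=2,\dots,n$ in turn the functions $s_{k,k-1},s_{k,k-2},\dots,s_{k,1}$. Let $\pi(J_{k,i})$ denote the restriction to $\mathcal L$ of the polynomial $J_{k,i}$ (defined in the context), regarded as an element of $K(\mathcal L)$. Then for every pair $(k,i)$ with $1\le k\le n$, $0\le i\le k-1$ there exist rational functions $\phi_{k,i}\neq 0$ and $\psi_{k,i}$ in the coordinate functions $s_{a,b}$ that are strictly smaller than $s_{k,i}$ in this order, such that $$\pi(J_{k,i})=\phi_{k,i}\,s_{k,i}+\psi_{k,i}.$$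
   Context: Let $M=\mathrm{Mat}(n,K)$ with standard coordinate functions $\{x_{ij}\}$, generic matrix $X=(x_{ij})$ and adjugate matrix $X^*=(x^*_{ij})$, $XX^*=X^*X=\det X\cdot E$. For $1\le k\le n$ and $0\le i\le k-1$, $J_{k,i}$ is the determinant of the $k\times k$ matrix whose first $k-i$ rows are the rows $n-k+i+1,\dots,n$ of $X$ restricted to columns $1,\dots,k$, and whose last $i$ rows are the rows $n-i+1,\dots,n$ of $X^*$ restricted to columns $1,\dots,k$. Note that on $\mathcal L$ the coordinate $x_{a,b}$ restricts to $s_{k,i}$ when $a=i-k+n+1$, $b=k$. *)

theory Defs
  imports "Jordan_Normal_Form.Determinant"
begin

text \<open>Points of \<open>\<L>\<close> are given by coordinate families \<open>s :: nat \<Rightarrow> nat \<Rightarrow> 'a\<close>,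
  where \<open>s k i\<close> is \<open>b_{k,i}\<close> (1 \<le> k \<le> n, 0 \<le> i \<le> k-1).  The associated
  n x n matrix (0-based indices in Jordan_Normal_Form): the entry in 1-based row
  \<open>i-k+n+1\<close>, column \<open>k\<close> is \<open>b_{k,i}\<close>, entries above are 0.\<close>

definition L_mat :: "nat \<Rightarrow> (nat \<Rightarrow> nat \<Rightarrow> 'a::zero) \<Rightarrow> 'a mat" where
  "L_mat n s = mat n n (\<lambda>(r, c).
      if n \<le> r + c + 1 then s (c + 1) (r + c + 1 - n) else 0)"

definition L_idx :: "nat \<Rightarrow> (nat \<times> nat) set" where
  "L_idx n = {(k, i). 1 \<le> k \<and> k \<le> n \<and> i < k}"

definition L_set :: "nat \<Rightarrow> (nat \<Rightarrow> nat \<Rightarrow> 'a::zero) set" where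
  "L_set n = {s. \<forall>k. 1 \<le> k \<and> k \<le> n \<longrightarrow> s k 0 \<noteq> 0}"

definition J_poly :: "nat \<Rightarrow> nat \<Rightarrow> nat \<Rightarrow> 'a::comm_ring_1 mat \<Rightarrow> 'a" where
  "J_poly n k i X = det (mat k k (\<lambda>(r, c).
      if r < k - i then X $$ (n - k + i + r, c)
      else adj_mat X $$ (n - i + (r - (k - i)), c)))"

definition var_less :: "nat \<times> nat \<Rightarrow> nat \<times> nat \<Rightarrow> bool" where
  "var_less ab ki = (case ab of (a, b) \<Rightarrow> case ki of (k, i) \<Rightarrow>
      (b = 0 \<and> i = 0 \<and> a < k) \<or> (b = 0 \<and> i \<noteq> 0) \<or>
      (b \<noteq> 0 \<and> i \<noteq> 0 \<and> (a < k \<or> (a = k \<and> i < b))))"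

inductive_set poly_fun :: "(nat \<times> nat) set \<Rightarrow> ((nat \<Rightarrow> nat \<Rightarrow> 'a::comm_ring_1) \<Rightarrow> 'a) set"
  for V where
  const: "(\<lambda>s. c) \<in> poly_fun V"
| var: "(a, b) \<in> V \<Longrightarrow> (\<lambda>s. s a b) \<in> poly_fun V"
| add: "p \<in> poly_fun V \<Longrightarrow> q \<in> poly_fun V \<Longrightarrow> (\<lambda>s. p s + q s) \<in> poly_fun V"
| mult: "p \<in> poly_fun V \<Longrightarrow> q \<in> poly_fun V \<Longrightarrow> (\<lambda>s. p s * q s) \<in> poly_fun V"

end

theory Submission
  imports Defs
begin

text \<open>On \<open>\<L>\<close> the matrix \<open>X\<close> vanishes above its antidiagonal, whose entries \<open>s_{k,0}\<close> are
  nonzero. Hence its adjugate vanishes below the antidiagonal and has the entries \<open>det X / s_{a,0}\<close>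
  on it. In \<open>J_{k,i}\<close> the \<open>i\<close> rows taken from the adjugate are therefore zero outside the first
  \<open>i\<close> columns, and \<open>J_{k,i}\<close> is, up to sign, a quotient of monomials in the \<open>s_{a,0}\<close> times
  the minor of \<open>X\<close> in rows \<open>n-k+i+1..n\<close> and columns \<open>i+1..k\<close>. The top right entry of that
  minor is \<open>s_{k,i}\<close>, and expanding along the top row writes the minor as \<open>s_{k,i}\<close> times a
  cofactor plus a polynomial; only variables smaller than \<open>s_{k,i}\<close> occur in both. The cofactor
  does not vanish identically: at a suitable point it is an antitriangular determinant with unit
  antidiagonal. For \<open>i = 0\<close> the minor itself is antitriangular and
  \<open>J_{k,0} = \<plusminus>s_{1,0}\<cdots>s_{k,0}\<close>.\<close>

lemma poly_fun_sum:
  assumes "finite S" "\<And>x. x \<in> S \<Longrightarrow> f x \<in> poly_fun V"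
  shows "(\<lambda>s. \<Sum>x\<in>S. f x s) \<in> poly_fun V"
  using assms
proof (induction S rule: finite_induct)
  case empty
  show ?case using poly_fun.const[of 0] by simp
next
  case (insert x F)
  then show ?case using poly_fun.add[of "f x" V "\<lambda>s. \<Sum>x\<in>F. f x s"] by simp
qed

lemma poly_fun_prod:
  assumes "finite S" "\<And>x. x \<in> S \<Longrightarrow> f x \<in> poly_fun V"
  shows "(\<lambda>s. \<Prod>x\<in>S. f x s) \<in> poly_fun V"
  using assms
proof (induction S rule: finite_induct)
  case empty
  show ?case using poly_fun.const[of 1] by simp
next
  case (insert x F)
  then show ?case using poly_fun.mult[of "f x" V "\<lambda>s. \<Prod>x\<in>F. f x s"] by simp
qed

lemma poly_fun_power: "p \<in> poly_fun V \<Longrightarrow> (\<lambda>s. p s ^ e) \<in> poly_fun V"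
  using poly_fun_prod[of "{..<e}" "\<lambda>_. p" V] by simp

lemma poly_fun_const_mult: "p \<in> poly_fun V \<Longrightarrow> (\<lambda>s. c * p s) \<in> poly_fun V"
  by (rule poly_fun.mult[OF poly_fun.const])

lemma poly_fun_det:
  assumes A: "\<And>s. A s \<in> carrier_mat m m"
    and entries: "\<And>r c. r < m \<Longrightarrow> c < m \<Longrightarrow> (\<lambda>s. A s $$ (r, c)) \<in> poly_fun V"
  shows "(\<lambda>s. det (A s)) \<in> poly_fun V"
proof -
  have "(\<lambda>s. \<Sum>p | p permutes {0..<m}. signof p * (\<Prod>r = 0..<m. A s $$ (r, p r))) \<in> poly_fun V"
  proof (rule poly_fun_sum)
    fix p assume "p \<in> {p. p permutes {0..<m}}"
    then show "(\<lambda>s. signof p * (\<Prod>r = 0..<m. A s $$ (r, p r))) \<in> poly_fun V"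
      using entries permutes_in_image[of p "{0..<m}"]
      by (intro poly_fun_const_mult poly_fun_prod) auto
  qed (simp add: finite_permutations)
  then show ?thesis
    by (simp only: det_def'[OF A])
qed

lemma poly_fun_cofactor:
  assumes A: "\<And>s. A s \<in> carrier_mat m m" and "i < m"
    and entries: "\<And>r c. r < m \<Longrightarrow> c < m \<Longrightarrow> r \<noteq> i \<Longrightarrow> (\<lambda>s. A s $$ (r, c)) \<in> poly_fun V"
  shows "(\<lambda>s. cofactor (A s) i j) \<in> poly_fun V"
  unfolding cofactor_def
proof (rule poly_fun_const_mult, rule poly_fun_det)
  show "mat_delete (A s) i j \<in> carrier_mat (m - 1) (m - 1)" for s
    using carrier_matD[OF A[of s]] by (intro carrier_matI) simp_all
  fix r c assume rc: "r < m - 1" "c < m - 1"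
  let ?r = "if r < i then r else Suc r" and ?c = "if c < j then c else Suc c"
  have "mat_delete (A s) i j $$ (r, c) = A s $$ (?r, ?c)" for s
    using A[of s] rc by (simp add: mat_delete_def)
  moreover have "(\<lambda>s. A s $$ (?r, ?c)) \<in> poly_fun V"
    using rc by (intro entries) auto
  ultimately show "(\<lambda>s. mat_delete (A s) i j $$ (r, c)) \<in> poly_fun V"
    by simp
qed

lemma signof_mult_self: "(signof p :: 'a::ring_1) * signof p = 1"
  by (simp flip: of_int_mult)

lemma signof_nonzero: "(signof p :: 'a::ring_1) \<noteq> 0"
  by (simp add: sign_def)

lemma det_eq_signof_mult_det_permute_rows:
  assumes "A \<in> carrier_mat m m" and "p permutes {0..<m}"
  shows "det A = signof p * det (mat m m (\<lambda>(r, c). A $$ (p r, c)))"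
  using det_permute_rows[OF assms] signof_mult_self[of p]
  by (metis (no_types, lifting) mult.assoc mult_1)

definition rev_perm :: "nat \<Rightarrow> nat \<Rightarrow> nat" where
  "rev_perm m r = (if r < m then m - 1 - r else r)"

lemma permutes_rev_perm: "rev_perm m permutes {0..<m}"
  by (rule bij_imp_permutes, rule bij_betw_byWitness[where f' = "rev_perm m"])
    (auto simp: rev_perm_def)

lemma det_zero_above_antidiagonal:
  assumes A: "A \<in> carrier_mat m m"
    and zero: "\<And>r c. r < m \<Longrightarrow> c < m \<Longrightarrow> r + c + 1 < m \<Longrightarrow> A $$ (r, c) = 0"
  shows "det A = signof (rev_perm m) * (\<Prod>r<m. A $$ (m - 1 - r, r))"
proof -
  let ?B = "mat m m (\<lambda>(r, c). A $$ (rev_perm m r, c))"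
  have "det ?B = prod_list (diag_mat ?B)"
    using zero by (intro det_upper_triangular upper_triangularI) (auto simp: rev_perm_def)
  also have "\<dots> = (\<Prod>r<m. A $$ (m - 1 - r, r))"
    by (simp add: prod_list_diag_prod rev_perm_def atLeast0LessThan)
  finally show ?thesis
    using det_eq_signof_mult_det_permute_rows[OF A permutes_rev_perm] by simp
qed

lemma det_zero_below_antidiagonal:
  assumes A: "A \<in> carrier_mat m m"
    and zero: "\<And>r c. r < m \<Longrightarrow> c < m \<Longrightarrow> m < r + c + 1 \<Longrightarrow> A $$ (r, c) = 0"
  shows "det A = signof (rev_perm m) * (\<Prod>r<m. A $$ (m - 1 - r, r))"
proof -
  let ?B = "mat m m (\<lambda>(r, c). A $$ (rev_perm m r, c))"
  have "det ?B = prod_list (diag_mat ?B)"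
    using zero by (intro det_lower_triangular[of m]) (auto simp: rev_perm_def)
  also have "\<dots> = (\<Prod>r<m. A $$ (m - 1 - r, r))"
    by (simp add: prod_list_diag_prod rev_perm_def atLeast0LessThan)
  finally show ?thesis
    using det_eq_signof_mult_det_permute_rows[OF A permutes_rev_perm] by simp
qed

lemma adj_mat_mult_antidiagonal_entry:
  fixes X :: "'a::comm_ring_1 mat"
  assumes X: "X \<in> carrier_mat n n"
    and zero: "\<And>r c. r < n \<Longrightarrow> c < n \<Longrightarrow> r + c + 1 < n \<Longrightarrow> X $$ (r, c) = 0"
    and "m < n" "j < n"
    and adj_zero: "\<And>c. n - 1 - j < c \<Longrightarrow> c < n \<Longrightarrow> adj_mat X $$ (m, c) = 0"
  shows "adj_mat X $$ (m, n - 1 - j) * X $$ (n - 1 - j, j) = (if m = j then det X else 0)"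
proof -
  let ?Y = "adj_mat X"
  have "(?Y * X) $$ (m, j) = (\<Sum>c\<in>{0..<n}. ?Y $$ (m, c) * X $$ (c, j))"
    using X adj_mat(1)[OF X] \<open>m < n\<close> \<open>j < n\<close> by (simp add: scalar_prod_def)
  also have "\<dots> = ?Y $$ (m, n - 1 - j) * X $$ (n - 1 - j, j)
      + (\<Sum>c\<in>{0..<n} - {n - 1 - j}. ?Y $$ (m, c) * X $$ (c, j))"
    using \<open>j < n\<close> by (intro sum.remove) auto
  also have "(\<Sum>c\<in>{0..<n} - {n - 1 - j}. ?Y $$ (m, c) * X $$ (c, j)) = 0"
  proof (rule sum.neutral, rule ballI)
    fix c assume "c \<in> {0..<n} - {n - 1 - j}"
    then consider "c < n - 1 - j" | "n - 1 - j < c" "c < n" by fastforce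
    then show "?Y $$ (m, c) * X $$ (c, j) = 0"
      by cases (use zero[of c j] adj_zero[of c] \<open>j < n\<close> in auto)
  qed
  finally show ?thesis
    using adj_mat(3)[OF X] \<open>m < n\<close> \<open>j < n\<close> by (cases "m = j") simp_all
qed

text \<open>Induction on the column, from the right: for \<open>m + c \<ge> n\<close> the entry \<open>(m, n - 1 - c)\<close> of
  \<open>adj X * X = det X \<cdot> 1\<close> reduces to \<open>adj X (m, c) \<cdot> X (c, n - 1 - c)\<close>, with a nonzero second factor.\<close>

lemma adj_mat_zero_below_antidiagonal:
  fixes X :: "'a::idom mat"
  assumes X: "X \<in> carrier_mat n n"
    and zero: "\<And>r c. r < n \<Longrightarrow> c < n \<Longrightarrow> r + c + 1 < n \<Longrightarrow> X $$ (r, c) = 0"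
    and nonzero: "\<And>c. c < n \<Longrightarrow> X $$ (n - 1 - c, c) \<noteq> 0"
    and "m < n" "c < n" "n \<le> m + c"
  shows "adj_mat X $$ (m, c) = 0"
proof -
  have "adj_mat X $$ (m, n - 1 - j) = 0" if "j < m" for j
    using that
  proof (induction j rule: less_induct)
    case (less j)
    have "adj_mat X $$ (m, n - 1 - j) * X $$ (n - 1 - j, j) = 0"
    proof (subst adj_mat_mult_antidiagonal_entry[OF X zero])
      fix c assume "n - 1 - j < c" "c < n"
      then show "adj_mat X $$ (m, c) = 0"
        using less.IH[of "n - 1 - c"] less.prems by (simp add: Suc_diff_Suc)
    qed (use less.prems \<open>m < n\<close> in auto)
    then show ?case
      using nonzero[of j] less.prems \<open>m < n\<close> by simp
  qed
  from this[of "n - 1 - c"] show ?thesis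
    using assms(4-) by (simp add: Suc_diff_Suc)
qed

lemma adj_mat_antidiagonal:
  fixes X :: "'a::idom mat"
  assumes X: "X \<in> carrier_mat n n"
    and zero: "\<And>r c. r < n \<Longrightarrow> c < n \<Longrightarrow> r + c + 1 < n \<Longrightarrow> X $$ (r, c) = 0"
    and nonzero: "\<And>c. c < n \<Longrightarrow> X $$ (n - 1 - c, c) \<noteq> 0"
    and "m < n"
  shows "adj_mat X $$ (m, n - 1 - m) * X $$ (n - 1 - m, m) = det X"
  using adj_mat_mult_antidiagonal_entry[OF X zero \<open>m < n\<close> \<open>m < n\<close>]
    adj_mat_zero_below_antidiagonal[OF X zero nonzero \<open>m < n\<close>]
  by simp

definition rotate_perm :: "nat \<Rightarrow> nat \<Rightarrow> nat \<Rightarrow> nat" where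
  "rotate_perm k i r = (if r < i then k - i + r else if r < k then r - i else r)"

lemma permutes_rotate_perm: "i \<le> k \<Longrightarrow> rotate_perm k i permutes {0..<k}"
  by (rule bij_imp_permutes, rule bij_betw_byWitness[where
        f' = "\<lambda>r. if r < k - i then r + i else if r < k then r - (k - i) else r"])
    (auto simp: rotate_perm_def)

text \<open>Moving the last \<open>i\<close> rows to the top makes the matrix block lower triangular.\<close>

lemma det_last_rows_zero_right:
  fixes M :: "'a::idom mat"
  assumes M: "M \<in> carrier_mat k k" and "i \<le> k"
    and zero: "\<And>r c. k - i \<le> r \<Longrightarrow> r < k \<Longrightarrow> i \<le> c \<Longrightarrow> c < k \<Longrightarrow> M $$ (r, c) = 0"
  shows "det M = signof (rotate_perm k i)
      * det (mat i i (\<lambda>(r, c). M $$ (k - i + r, c)))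
      * det (mat (k - i) (k - i) (\<lambda>(r, c). M $$ (r, i + c)))"
proof -
  let ?B = "mat i i (\<lambda>(r, c). M $$ (k - i + r, c))"
  let ?C = "mat (k - i) i (\<lambda>(r, c). M $$ (r, c))"
  let ?D = "mat (k - i) (k - i) (\<lambda>(r, c). M $$ (r, i + c))"
  have "mat k k (\<lambda>(r, c). M $$ (rotate_perm k i r, c)) = four_block_mat ?B (0\<^sub>m i (k - i)) ?C ?D"
    using \<open>i \<le> k\<close> zero
    by (intro eq_matI) (auto simp: rotate_perm_def)
  then show ?thesis
    using det_eq_signof_mult_det_permute_rows[OF M permutes_rotate_perm[OF \<open>i \<le> k\<close>]]
      det_four_block_mat_upper_right_zero[of ?B i "0\<^sub>m i (k - i)" "k - i" ?C ?D]
    by simp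
qed

lemma det_adj_mat_last_rows:
  fixes X :: "'a::field mat"
  assumes X: "X \<in> carrier_mat n n"
    and zero: "\<And>r c. r < n \<Longrightarrow> c < n \<Longrightarrow> r + c + 1 < n \<Longrightarrow> X $$ (r, c) = 0"
    and nonzero: "\<And>c. c < n \<Longrightarrow> X $$ (n - 1 - c, c) \<noteq> 0"
    and "i \<le> n"
  shows "det (mat i i (\<lambda>(r, c). adj_mat X $$ (n - i + r, c)))
      = signof (rev_perm i) * (\<Prod>r<i. det X / X $$ (r, n - 1 - r))"
proof -
  have "det (mat i i (\<lambda>(r, c). adj_mat X $$ (n - i + r, c)))
      = signof (rev_perm i) * (\<Prod>r<i. adj_mat X $$ (n - 1 - r, r))"
    using \<open>i \<le> n\<close> adj_mat_zero_below_antidiagonal[OF X zero nonzero]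
    by (subst det_zero_below_antidiagonal[of _ i]) (auto simp: Suc_diff_Suc)
  also have "(\<Prod>r<i. adj_mat X $$ (n - 1 - r, r)) = (\<Prod>r<i. det X / X $$ (r, n - 1 - r))"
  proof (rule prod.cong)
    fix r assume "r \<in> {..<i}"
    then have "r < n" using \<open>i \<le> n\<close> by simp
    then show "adj_mat X $$ (n - 1 - r, r) = det X / X $$ (r, n - 1 - r)"
      using adj_mat_antidiagonal[OF X zero nonzero, of "n - 1 - r"] nonzero[of "n - 1 - r"]
      by (simp add: Suc_diff_Suc field_simps)
  qed simp
  finally show ?thesis .
qed

text \<open>In \<open>J_{k,i}\<close> the \<open>i\<close> rows taken from the adjugate vanish outside the first \<open>i\<close> columns.\<close>

lemma J_poly_zero_above_antidiagonal:
  fixes X :: "'a::field mat"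
  assumes X: "X \<in> carrier_mat n n"
    and zero: "\<And>r c. r < n \<Longrightarrow> c < n \<Longrightarrow> r + c + 1 < n \<Longrightarrow> X $$ (r, c) = 0"
    and nonzero: "\<And>c. c < n \<Longrightarrow> X $$ (n - 1 - c, c) \<noteq> 0"
    and "i \<le> k" "k \<le> n"
  shows "J_poly n k i X = signof (rotate_perm k i) * signof (rev_perm i)
      * (\<Prod>r<i. det X / X $$ (r, n - 1 - r))
      * det (mat (k - i) (k - i) (\<lambda>(r, c). X $$ (n - k + i + r, i + c)))"
proof -
  let ?M = "mat k k (\<lambda>(r, c). if r < k - i then X $$ (n - k + i + r, c)
      else adj_mat X $$ (n - i + (r - (k - i)), c))"
  have "J_poly n k i X = det ?M"
    unfolding J_poly_def ..
  also have "\<dots> = signof (rotate_perm k i)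
      * det (mat i i (\<lambda>(r, c). adj_mat X $$ (n - i + r, c)))
      * det (mat (k - i) (k - i) (\<lambda>(r, c). X $$ (n - k + i + r, i + c)))"
  proof (subst det_last_rows_zero_right[of _ k i])
    fix r c assume "k - i \<le> r" "r < k" "i \<le> c" "c < k"
    then show "?M $$ (r, c) = 0"
      using \<open>k \<le> n\<close> by (auto intro: adj_mat_zero_below_antidiagonal[OF X zero nonzero])
  next
    have "mat i i (\<lambda>(r, c). ?M $$ (k - i + r, c)) = mat i i (\<lambda>(r, c). adj_mat X $$ (n - i + r, c))"
      "mat (k - i) (k - i) (\<lambda>(r, c). ?M $$ (r, i + c))
        = mat (k - i) (k - i) (\<lambda>(r, c). X $$ (n - k + i + r, i + c))"
      using \<open>i \<le> k\<close> by (auto intro!: eq_matI)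
    then show "signof (rotate_perm k i) * det (mat i i (\<lambda>(r, c). ?M $$ (k - i + r, c)))
        * det (mat (k - i) (k - i) (\<lambda>(r, c). ?M $$ (r, i + c)))
      = signof (rotate_perm k i) * det (mat i i (\<lambda>(r, c). adj_mat X $$ (n - i + r, c)))
        * det (mat (k - i) (k - i) (\<lambda>(r, c). X $$ (n - k + i + r, i + c)))"
      by simp
  qed (use \<open>i \<le> k\<close> in simp_all)
  finally show ?thesis
    using det_adj_mat_last_rows[OF X zero nonzero] assms(4,5) by simp
qed

lemma L_mat_carrier: "L_mat n s \<in> carrier_mat n n"
  unfolding L_mat_def by simp

lemma L_mat_index:
  "r < n \<Longrightarrow> c < n \<Longrightarrow> L_mat n s $$ (r, c) = (if n \<le> r + c + 1 then s (c + 1) (r + c + 1 - n) else 0)"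
  unfolding L_mat_def by simp

text \<open>The rows \<open>n - k + i + 1, \<dots>, n\<close> and columns \<open>i + 1, \<dots>, k\<close> of \<open>L_mat n s\<close>;
  they do not depend on \<open>n\<close>.\<close>

definition J_block :: "nat \<Rightarrow> nat \<Rightarrow> (nat \<Rightarrow> nat \<Rightarrow> 'a::zero) \<Rightarrow> 'a mat" where
  "J_block k i s = mat (k - i) (k - i) (\<lambda>(r, c).
      if k \<le> 2 * i + r + c + 1 then s (i + c + 1) (2 * i + r + c + 1 - k) else 0)"

lemma J_block_carrier: "J_block k i s \<in> carrier_mat (k - i) (k - i)"
  unfolding J_block_def by simp

lemma L_mat_eq_J_block: "L_mat n s = J_block n 0 s"
  by (intro eq_matI) (simp_all add: L_mat_def J_block_def)

lemma det_J_block_0: "det (J_block k 0 s) = signof (rev_perm k) * (\<Prod>c<k. s (c + 1) 0)"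
  by (subst det_zero_above_antidiagonal[OF J_block_carrier]) (auto simp: J_block_def)

lemma det_L_mat: "det (L_mat n s) = signof (rev_perm n) * (\<Prod>c<n. s (c + 1) 0)"
  unfolding L_mat_eq_J_block by (rule det_J_block_0)

lemma J_poly_L_mat:
  fixes s :: "nat \<Rightarrow> nat \<Rightarrow> 'a::field"
  assumes "i \<le> k" "k \<le> n" "s \<in> L_set n"
  shows "J_poly n k i (L_mat n s) = signof (rotate_perm k i) * signof (rev_perm i)
      * (\<Prod>r<i. det (L_mat n s) / s (n - r) 0) * det (J_block k i s)"
proof -
  have nonzero: "L_mat n s $$ (n - 1 - c, c) \<noteq> 0" if "c < n" for c
    using that \<open>s \<in> L_set n\<close> by (simp add: L_mat_index L_set_def)
  have "(\<Prod>r<i. det (L_mat n s) / L_mat n s $$ (r, n - 1 - r)) = (\<Prod>r<i. det (L_mat n s) / s (n - r) 0)"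
    using assms(1,2) by (intro prod.cong) (auto simp: L_mat_index Suc_diff_Suc)
  moreover have "mat (k - i) (k - i) (\<lambda>(r, c). L_mat n s $$ (n - k + i + r, i + c)) = J_block k i s"
    using assms(1,2) by (intro eq_matI) (auto simp: L_mat_index J_block_def mult_2 mult_2_right ac_simps)
  ultimately show ?thesis
    using J_poly_zero_above_antidiagonal[OF L_mat_carrier _ nonzero assms(1,2)]
    by (simp add: L_mat_index)
qed

lemma det_J_block_expansion:
  assumes "i < k"
  shows "det (J_block k i s) = s k i * cofactor (J_block k i s) 0 (k - i - 1)
      + (\<Sum>c<k - i - 1. J_block k i s $$ (0, c) * cofactor (J_block k i s) 0 c)"
proof -
  obtain m where m: "k - i = Suc m" and k: "k = Suc (i + m)"
    using assms by (metis Suc_diff_Suc add_Suc_right le_add_diff_inverse less_imp_le)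
  have "J_block k i s $$ (0, m) = s k i"
    using m k by (simp add: J_block_def)
  then show ?thesis
    using laplace_expansion_row[OF J_block_carrier[of k i s], of 0] m by (simp add: lessThan_Suc)
qed

abbreviation smaller_vars :: "nat \<Rightarrow> nat \<times> nat \<Rightarrow> (nat \<times> nat) set" where
  "smaller_vars n ki \<equiv> {ab \<in> L_idx n. var_less ab ki}"

lemma poly_fun_J_block_index:
  assumes "0 < i" "i < k" "k \<le> n" "r < k - i" "c < k - i" "0 < r \<or> c < k - i - 1"
  shows "(\<lambda>s. J_block k i s $$ (r, c)) \<in> poly_fun (smaller_vars n (k, i))"
proof (cases "k \<le> 2 * i + r + c + 1")
  case True
  then have "(i + c + 1, 2 * i + r + c + 1 - k) \<in> smaller_vars n (k, i)"
    using assms by (auto simp: L_idx_def var_less_def)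
  then show ?thesis
    using True assms(4,5) by (simp add: J_block_def poly_fun.var)
next
  case False
  then show ?thesis
    using assms(4,5) by (simp add: J_block_def poly_fun.const)
qed

text \<open>At this point the matrix behind the cofactor vanishes below its antidiagonal and has ones on it.\<close>

lemma cofactor_J_block_nonzero:
  assumes "0 < i" "i < k"
  shows "cofactor (J_block k i (\<lambda>a b. if b = 0 \<or> b = i then 1 else 0)) 0 (k - i - 1) \<noteq> (0::'a::idom)"
proof -
  let ?D = "mat_delete (J_block k i (\<lambda>a b. if b = 0 \<or> b = i then 1 else 0 :: 'a)) 0 (k - i - 1)"
  let ?m = "k - i - 1"
  have D: "?D \<in> carrier_mat ?m ?m"
    by (simp add: mat_delete_def J_block_def)
  have "det ?D = signof (rev_perm ?m) * (\<Prod>r<?m. ?D $$ (?m - 1 - r, r))"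
    using assms by (intro det_zero_below_antidiagonal[OF D]) (auto simp: mat_delete_def J_block_def)
  also have "(\<Prod>r<?m. ?D $$ (?m - 1 - r, r)) = 1"
    using assms by (intro prod.neutral) (auto simp: mat_delete_def J_block_def)
  finally show ?thesis
    by (simp add: cofactor_def signof_nonzero)
qed

lemma antidiagonal_var_mem_smaller_vars:
  "1 \<le> a \<Longrightarrow> a \<le> n \<Longrightarrow> 0 < i \<or> a < k \<Longrightarrow> (a, 0) \<in> smaller_vars n (k, i)"
  by (auto simp: L_idx_def var_less_def)

lemma poly_fun_antidiagonal_prod:
  assumes "\<And>r. r \<in> S \<Longrightarrow> 1 \<le> f r \<and> f r \<le> n \<and> (0 < i \<or> f r < k)" "finite S"
  shows "(\<lambda>s. \<Prod>r\<in>S. s (f r) 0) \<in> poly_fun (smaller_vars n (k, i))"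
  using assms by (intro poly_fun_prod poly_fun.var antidiagonal_var_mem_smaller_vars) auto

lemma J_poly_L_mat_0:
  fixes s :: "nat \<Rightarrow> nat \<Rightarrow> 'a::field"
  assumes "1 \<le> k" "k \<le> n" "s \<in> L_set n"
  shows "J_poly n k 0 (L_mat n s)
      = signof (rev_perm k) * (\<Prod>c<k - 1. s (c + 1) 0) * s k 0"
proof -
  have id_perms: "rotate_perm k 0 = id" "rev_perm 0 = id"
    by (auto simp: rotate_perm_def rev_perm_def)
  obtain m where "k = Suc m"
    using \<open>1 \<le> k\<close> by (cases k) auto
  then have "(\<Prod>c<k. s (c + 1) 0) = (\<Prod>c<k - 1. s (c + 1) 0) * s k 0"
    by simp
  then show ?thesis
    using J_poly_L_mat[of 0 k n s] assms by (simp add: det_J_block_0 id_perms sign_id)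
qed

lemma J_poly_L_mat_linear_0:
  assumes "1 \<le> k" "k \<le> n"
  obtains p :: "(nat \<Rightarrow> nat \<Rightarrow> 'a::field) \<Rightarrow> 'a"
  where "p \<in> poly_fun (smaller_vars n (k, 0))" "\<exists>s \<in> L_set n. p s \<noteq> 0"
    "\<And>s. s \<in> L_set n \<Longrightarrow> J_poly n k 0 (L_mat n s) = p s * s k 0"
proof (rule that)
  let ?p = "\<lambda>s. signof (rev_perm k) * (\<Prod>c<k - 1. s (c + 1) 0) :: 'a"
  show "?p \<in> poly_fun (smaller_vars n (k, 0))"
    using assms by (intro poly_fun_const_mult poly_fun_antidiagonal_prod) auto
  show "\<exists>s \<in> L_set n. ?p s \<noteq> 0"
    by (rule bexI[of _ "\<lambda>a b. 1"]) (simp_all add: L_set_def signof_nonzero)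
  show "J_poly n k 0 (L_mat n s) = ?p s * s k 0" if "s \<in> L_set n" for s
    using J_poly_L_mat_0[OF assms that] .
qed

lemma J_poly_L_mat_linear_pos:
  assumes "0 < i" "i < k" "k \<le> n"
  obtains p q r :: "(nat \<Rightarrow> nat \<Rightarrow> 'a::field) \<Rightarrow> 'a"
  where "p \<in> poly_fun (smaller_vars n (k, i))" "q \<in> poly_fun (smaller_vars n (k, i))"
    "r \<in> poly_fun (smaller_vars n (k, i))"
    "\<exists>s \<in> L_set n. p s \<noteq> 0" "\<And>s. s \<in> L_set n \<Longrightarrow> q s \<noteq> 0"
    "\<And>s. s \<in> L_set n \<Longrightarrow> J_poly n k i (L_mat n s) = (p s * s k i + r s) / q s"
proof -
  let ?K = "\<lambda>s. signof (rotate_perm k i) * signof (rev_perm i) * det (L_mat n s) ^ i :: 'a"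
  let ?Q = "\<lambda>s. \<Prod>r<i. s (n - r) 0 :: 'a"
  let ?C = "\<lambda>s. cofactor (J_block k i s) 0 (k - i - 1) :: 'a"
  let ?R = "\<lambda>s. \<Sum>c<k - i - 1. J_block k i s $$ (0, c) * cofactor (J_block k i s) 0 c :: 'a"
  have Q: "?Q \<in> poly_fun (smaller_vars n (k, i))"
    using assms by (intro poly_fun_antidiagonal_prod) auto
  have K: "?K \<in> poly_fun (smaller_vars n (k, i))"
    unfolding det_L_mat
    by (intro poly_fun_const_mult poly_fun_power poly_fun_antidiagonal_prod) (use assms in auto)
  have cofactor: "(\<lambda>s. cofactor (J_block k i s) 0 c) \<in> poly_fun (smaller_vars n (k, i))" for c
    using assms by (intro poly_fun_cofactor[OF J_block_carrier] poly_fun_J_block_index) auto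
  have R: "?R \<in> poly_fun (smaller_vars n (k, i))"
    using assms by (intro poly_fun_sum poly_fun.mult poly_fun_J_block_index cofactor) auto
  define s0 :: "nat \<Rightarrow> nat \<Rightarrow> 'a" where "s0 = (\<lambda>a b. if b = 0 \<or> b = i then 1 else 0)"
  have "s0 \<in> L_set n" "?K s0 * ?C s0 \<noteq> 0"
    using cofactor_J_block_nonzero[OF \<open>0 < i\<close> \<open>i < k\<close>]
    by (simp_all add: s0_def L_set_def det_L_mat signof_nonzero)
  then have p_nonzero: "\<exists>s \<in> L_set n. ?K s * ?C s \<noteq> 0"
    by blast
  have Q_nonzero: "?Q s \<noteq> 0" if "s \<in> L_set n" for s
    using that assms by (simp add: L_set_def)
  have J: "J_poly n k i (L_mat n s) = (?K s * ?C s * s k i + ?K s * ?R s) / ?Q s"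
    if "s \<in> L_set n" for s
  proof -
    have "J_poly n k i (L_mat n s) = ?K s / ?Q s * det (J_block k i s)"
      using J_poly_L_mat[of i k n s] assms that by (simp add: prod_dividef)
    then show ?thesis
      by (simp add: det_J_block_expansion[OF \<open>i < k\<close>] algebra_simps add_divide_distrib)
  qed
  show ?thesis
    using poly_fun.mult[OF K cofactor[of "k - i - 1"]] Q poly_fun.mult[OF K R] p_nonzero Q_nonzero J
    by (rule that)
qed

lemma J_poly_L_mat_linear:
  assumes "(k, i) \<in> L_idx n"
  obtains p q r :: "(nat \<Rightarrow> nat \<Rightarrow> 'a::field) \<Rightarrow> 'a"
  where "p \<in> poly_fun (smaller_vars n (k, i))" "q \<in> poly_fun (smaller_vars n (k, i))"
    "r \<in> poly_fun (smaller_vars n (k, i))"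
    "\<exists>s \<in> L_set n. p s \<noteq> 0" "\<And>s. s \<in> L_set n \<Longrightarrow> q s \<noteq> 0"
    "\<And>s. s \<in> L_set n \<Longrightarrow> J_poly n k i (L_mat n s) = (p s * s k i + r s) / q s"
proof (cases "i = 0")
  case True
  from assms True have "1 \<le> k" "k \<le> n"
    by (auto simp: L_idx_def)
  show ?thesis
  proof (rule J_poly_L_mat_linear_0[OF \<open>1 \<le> k\<close> \<open>k \<le> n\<close>])
    fix p :: "(nat \<Rightarrow> nat \<Rightarrow> 'a) \<Rightarrow> 'a"
    assume "p \<in> poly_fun (smaller_vars n (k, 0))" "\<exists>s \<in> L_set n. p s \<noteq> 0"
      "\<And>s. s \<in> L_set n \<Longrightarrow> J_poly n k 0 (L_mat n s) = p s * s k 0"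
    with True show ?thesis
      by (intro that[of p "\<lambda>s. 1" "\<lambda>s. 0"]) (simp_all add: poly_fun.const)
  qed
next
  case False
  with assms have "0 < i" "i < k" "k \<le> n"
    by (auto simp: L_idx_def)
  from J_poly_L_mat_linear_pos[OF this that] show ?thesis .
qed

theorem proposition2:
  fixes n :: nat and k i :: nat
  assumes "n \<ge> 1" and "(k, i) \<in> L_idx n"
  shows "\<exists>p1 q1 p2 q2 :: (nat \<Rightarrow> nat \<Rightarrow> 'a::field_char_0) \<Rightarrow> 'a.
           p1 \<in> poly_fun {ab \<in> L_idx n. var_less ab (k, i)} \<and>
           q1 \<in> poly_fun {ab \<in> L_idx n. var_less ab (k, i)} \<and>
           p2 \<in> poly_fun {ab \<in> L_idx n. var_less ab (k, i)} \<and>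
           q2 \<in> poly_fun {ab \<in> L_idx n. var_less ab (k, i)} \<and>
           (\<exists>s \<in> L_set n. q1 s \<noteq> 0) \<and>
           (\<exists>s \<in> L_set n. q2 s \<noteq> 0) \<and>
           (\<exists>s \<in> L_set n. q1 s \<noteq> 0 \<and> p1 s \<noteq> 0) \<and>
           (\<forall>s \<in> L_set n. q1 s \<noteq> 0 \<longrightarrow> q2 s \<noteq> 0 \<longrightarrow>
              J_poly n k i (L_mat n s) = p1 s / q1 s * s k i + p2 s / q2 s)"
proof -
  obtain p q r :: "(nat \<Rightarrow> nat \<Rightarrow> 'a) \<Rightarrow> 'a"
    where polys: "p \<in> poly_fun (smaller_vars n (k, i))" "q \<in> poly_fun (smaller_vars n (k, i))"
      "r \<in> poly_fun (smaller_vars n (k, i))"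
      and p_nonzero: "\<exists>s \<in> L_set n. p s \<noteq> 0" and q_nonzero: "\<And>s. s \<in> L_set n \<Longrightarrow> q s \<noteq> 0"
      and J: "\<And>s. s \<in> L_set n \<Longrightarrow> J_poly n k i (L_mat n s) = (p s * s k i + r s) / q s"
    using J_poly_L_mat_linear[OF assms(2)] by blast
  from p_nonzero obtain s0 where "s0 \<in> L_set n" "p s0 \<noteq> 0" ..
  moreover have "J_poly n k i (L_mat n s) = p s / q s * s k i + r s / q s" if "s \<in> L_set n" for s
    using J[OF that] by (simp add: add_divide_distrib)
  ultimately show ?thesis
    using polys q_nonzero by (intro exI[of _ p] exI[of _ q] exI[of _ r] exI[of _ q] conjI bexI[of _ s0]) simp_all
qed

end
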